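(* Let $\xi=(\tau_L,\delta_L,\tau_R,\delta_R)\in\Phi_{\rm BYG}$ and suppose $J_1(\xi)>1$ and $\lambda_L^s+|\lambda_R^s|<1$. Let $\alpha\subset\Omega$ be a line segment with slope in $K=[-\lambda_L^s,|\lambda_R^s|]$. Then there exist $n\ge1$ and points $P$ on the $y$-axis and $Q$ on the $x$-axis such that the line segment from $P$ to $Q$ is contained in $f_\xi^n(\alpha)$. Moreover, this segment from $P$ to $Q$ intersects the line segment from $V$ to $f_\xi^{-1}(V)$ transversally.
   Context: For $\xi=(\tau_L,\delta_L,\tau_R,\delta_R)\in\mathbb{R}^4$ define $f_\xi(x,y)=(\tau_L x+y+1,\,-\delta_L x)$ if $x\le 0$ and $f_\xi(x,y)=(\tau_R x+y+1,\,-\delta_R x)$ if $x\ge 0$. Let $A_L=\begin{bmatrix}\tau_L&1\\-\delta_L&0\end{bmatrix}$, $A_R=\begin{bmatrix}\tau_R&1\\-\delta_R&0\end{bmatrix}$, $\Phi=\{\xi: \tau_L>\delta_L+1,\ \delta_L>0,\ \tau_R<-(\delta_R+1),\ \delta_R>0\}$. For $\xi\in\Phi$ the eigenvalues of $A_L$ are real with $0<\lambda_L^s<1<\lambda_L^u$, those of $A_R$ are real with $\lambda_R^u<-1<\lambda_R^s<0$, $f_\xi$ is a homeomorphism, and $Y=\left(\frac{-1}{\tau_L-\delta_L-1},\frac{\delta_L}{\tau_L-\delta_L-1}\right)$ is a fixed point. Let $\phi(\xi)=\delta_R-\left(\tau_R+\delta_L+\delta_R-(1+\tau_R)\lambda_L^u\right)\lambda_L^u$,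 $\Phi_{\rm BYG}=\{\xi\in\Phi:\phi(\xi)>0\}$, and $J_1(\xi)=\frac{\lambda_L^u(\lambda_R^u)^2}{\lambda_L^u+|\lambda_R^u|}$. Let $D=\left(\frac{1}{1-\lambda_L^s},0\right)$. Let $E^s(Y)$ be the line through $Y$ in the direction of an eigenvector of $A_L$ for $\lambda_L^s$, let $B$ be the intersection of the line segment from $Y$ to $D$ with the line through $f_\xi(D)$ parallel to $E^s(Y)$, and let $\Omega$ be the filled triangle with vertices $D$, $f_\xi(D)$, $B$. Let $V=\left(0,\frac{-\lambda_R^u}{\lambda_R^u-1}\right)$. A line segment has slope $m$ if it is parallel to $(1,m)$. *)

theory Defs
  imports "HOL-Analysis.Analysis"
begin

definition fxi :: "real \<Rightarrow> real \<Rightarrow> real \<Rightarrow> real \<Rightarrow> real \<times> real \<Rightarrow> real \<times> real" where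
  "fxi tL dL tR dR p = (if fst p \<le> 0
      then (tL * fst p + snd p + 1, - dL * fst p)
      else (tR * fst p + snd p + 1, - dR * fst p))"

definition A_L :: "real \<Rightarrow> real \<Rightarrow> real \<times> real \<Rightarrow> real \<times> real" where
  "A_L tL dL v = (tL * fst v + snd v, - dL * fst v)"

definition Phi :: "(real \<times> real \<times> real \<times> real) set" where
  "Phi = {(tL, dL, tR, dR). tL > dL + 1 \<and> dL > 0 \<and> tR < -(dR + 1) \<and> dR > 0}"

text \<open>Eigenvalues (roots of the characteristic polynomial x^2 - t x + d).\<close>
definition lamLs :: "real \<Rightarrow> real \<Rightarrow> real" where
  "lamLs tL dL = (tL - sqrt (tL^2 - 4 * dL)) / 2"
definition lamLu :: "real \<Rightarrow> real \<Rightarrow> real" where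
  "lamLu tL dL = (tL + sqrt (tL^2 - 4 * dL)) / 2"
definition lamRs :: "real \<Rightarrow> real \<Rightarrow> real" where
  "lamRs tR dR = (tR + sqrt (tR^2 - 4 * dR)) / 2"
definition lamRu :: "real \<Rightarrow> real \<Rightarrow> real" where
  "lamRu tR dR = (tR - sqrt (tR^2 - 4 * dR)) / 2"

definition phi :: "real \<Rightarrow> real \<Rightarrow> real \<Rightarrow> real \<Rightarrow> real" where
  "phi tL dL tR dR = dR - (tR + dL + dR - (1 + tR) * lamLu tL dL) * lamLu tL dL"

definition Phi_BYG :: "(real \<times> real \<times> real \<times> real) set" where
  "Phi_BYG = {(tL, dL, tR, dR). (tL, dL, tR, dR) \<in> Phi \<and> phi tL dL tR dR > 0}"

definition J1 :: "real \<Rightarrow> real \<Rightarrow> real \<Rightarrow> real \<Rightarrow> real" where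
  "J1 tL dL tR dR = lamLu tL dL * (lamRu tR dR)^2 / (lamLu tL dL + \<bar>lamRu tR dR\<bar>)"

definition Ypt :: "real \<Rightarrow> real \<Rightarrow> real \<times> real" where
  "Ypt tL dL = (-1 / (tL - dL - 1), dL / (tL - dL - 1))"

definition Dpt :: "real \<Rightarrow> real \<Rightarrow> real \<times> real" where
  "Dpt tL dL = (1 / (1 - lamLs tL dL), 0)"

definition Bpt :: "real \<Rightarrow> real \<Rightarrow> real \<Rightarrow> real \<Rightarrow> real \<times> real" where
  "Bpt tL dL tR dR = (THE b. b \<in> closed_segment (Ypt tL dL) (Dpt tL dL) \<and>
     (\<exists>v t. v \<noteq> 0 \<and> A_L tL dL v = lamLs tL dL *\<^sub>R v \<and>
            b = fxi tL dL tR dR (Dpt tL dL) + t *\<^sub>R v))"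

definition Omega :: "real \<Rightarrow> real \<Rightarrow> real \<Rightarrow> real \<Rightarrow> (real \<times> real) set" where
  "Omega tL dL tR dR = convex hull {Dpt tL dL, fxi tL dL tR dR (Dpt tL dL), Bpt tL dL tR dR}"

definition Vpt :: "real \<Rightarrow> real \<Rightarrow> real \<times> real" where
  "Vpt tR dR = (0, - lamRu tR dR / (lamRu tR dR - 1))"

definition is_segment_with_slope :: "(real \<times> real) set \<Rightarrow> real \<Rightarrow> bool" where
  "is_segment_with_slope S m \<longleftrightarrow>
     (\<exists>a b. a \<noteq> b \<and> S = closed_segment a b \<and> (\<exists>c. c \<noteq> 0 \<and> b - a = c *\<^sub>R (1, m)))"

definition transversal_segments :: "real \<times> real \<Rightarrow> real \<times> real \<Rightarrow> real \<times> real \<Rightarrow> real \<times> real \<Rightarrow> bool" where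
  "transversal_segments p q u w \<longleftrightarrow>
     p \<noteq> q \<and> u \<noteq> w \<and> closed_segment p q \<inter> closed_segment u w \<noteq> {} \<and>
     fst (q - p) * snd (w - u) - snd (q - p) * fst (w - u) \<noteq> 0"

end

theory Submission
  imports Defs
begin

(* Write a = lamLs, b = lamLu, r = |lamRs|, u = |lamRu|. Both branches of f are affine, and a
   check at the three vertices shows f(Omega) <= Omega. The linear parts map the cone of slopes
   [-a, r] into itself and stretch horizontal widths by at least b (left) and u (right). A
   segment in the cone crossing the y-axis at z is cut there; the images of the two halves both
   end at f(z), on the x-axis, and the longer one has at least bu/(b+u) times the original width.
   If that piece reaches back to x <= 0 it contains the required segment PQ; otherwise one more
   step on the right stretches it by u, for a total factor J1 = bu^2/(b+u) > 1. Widths in the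
   bounded set Omega cannot grow forever, so the first case occurs. Transversality with
   [V, f^-1(V)] holds because Omega meets the y-axis only above V and the line through V and
   f^-1(V) only to the left of f^-1(V). *)

definition orient :: "real \<times> real \<Rightarrow> real \<times> real \<Rightarrow> real \<times> real \<Rightarrow> real" where
  "orient P Q X = (fst Q - fst P) * (snd X - snd P) - (snd Q - snd P) * (fst X - fst P)"

lemma affine_nonpos_on_convex_hull:
  fixes S :: "(real \<times> real) set"
  assumes "p \<in> convex hull S" and "\<And>z. z \<in> S \<Longrightarrow> c1 * fst z + c2 * snd z + c0 \<le> 0"
  shows "c1 * fst p + c2 * snd p + c0 \<le> 0"
proof -
  have "S \<subseteq> {z. (c1, c2) \<bullet> z \<le> - c0}"
    using assms(2) by (force simp: inner_prod_def)
  then have "convex hull S \<subseteq> {z. (c1, c2) \<bullet> z \<le> - c0}"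
    by (simp add: hull_minimal convex_halfspace_le)
  then show ?thesis
    using assms(1) by (auto simp: inner_prod_def)
qed

lemma in_convex_hull3_if_orient_nonpos:
  assumes "orient A B C < 0"
    and "orient A B X \<le> 0" "orient B C X \<le> 0" "orient C A X \<le> 0"
  shows "X \<in> convex hull {A, B, C}"
proof -
  define \<Delta> where "\<Delta> = orient A B C"
  have \<Delta>: "\<Delta> < 0" and sum: "orient B C X + orient C A X + orient A B X = \<Delta>"
    using assms(1) by (simp_all add: \<Delta>_def orient_def algebra_simps)
  have "\<Delta> *\<^sub>R X = orient B C X *\<^sub>R A + orient C A X *\<^sub>R B + orient A B X *\<^sub>R C"
    unfolding \<Delta>_def orient_def by (simp add: prod_eq_iff algebra_simps)
  then have "X = (orient B C X / \<Delta>) *\<^sub>R A + (orient C A X / \<Delta>) *\<^sub>R B + (orient A B X / \<Delta>) *\<^sub>R C"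
    using \<Delta> by (simp add: prod_eq_iff field_simps)
  moreover have "orient B C X / \<Delta> + orient C A X / \<Delta> + orient A B X / \<Delta> = 1"
    using sum \<Delta> by (simp add: field_simps)
  moreover have "0 \<le> orient B C X / \<Delta>" "0 \<le> orient C A X / \<Delta>" "0 \<le> orient A B X / \<Delta>"
    using \<Delta> assms(2-4) by (simp_all add: divide_nonpos_neg)
  ultimately show ?thesis
    unfolding convex_hull_3 by blast
qed

definition fxi_piece :: "real \<Rightarrow> real \<Rightarrow> real \<times> real \<Rightarrow> real \<times> real" where
  "fxi_piece t d p = (t * fst p + snd p + 1, - d * fst p)"

lemma fxi_eq_piece:
  "fxi tL dL tR dR p = (if fst p \<le> 0 then fxi_piece tL dL p else fxi_piece tR dR p)"
  by (simp add: fxi_def fxi_piece_def)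

lemma fxi_piece_y_axis: "fst p = 0 \<Longrightarrow> fxi_piece t d p = (snd p + 1, 0)"
  by (simp add: fxi_piece_def)

lemma fxi_piece_closed_segment:
  "fxi_piece t d ` closed_segment x y = closed_segment (fxi_piece t d x) (fxi_piece t d y)"
proof -
  have "linear (A_L t d)"
    by (rule linearI) (simp_all add: A_L_def algebra_simps)
  moreover have "fxi_piece t d = (+) (1, 0) \<circ> A_L t d"
    by (simp add: fun_eq_iff fxi_piece_def A_L_def)
  ultimately show ?thesis
    by (simp add: closed_segment_linear_image closed_segment_translation image_comp)
qed

lemma orient_fxi_piece_affine:
  "\<exists>c1 c2 c0. \<forall>z. orient P Q (fxi_piece t d z) = c1 * fst z + c2 * snd z + c0"
  by (intro exI[of _ "- (fst Q - fst P) * d - (snd Q - snd P) * t"] exI[of _ "- (snd Q - snd P)"]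
      exI[of _ "- (fst Q - fst P) * snd P - (snd Q - snd P) * (1 - fst P)"] allI)
    (simp add: orient_def fxi_piece_def algebra_simps)

lemma fst_closed_segment: "fst ` closed_segment x y = closed_segment (fst x) (fst y)"
  by (simp add: closed_segment_linear_image linear_fst)

lemma fxi_closed_segment_left:
  assumes "fst x \<le> 0" "fst y \<le> 0"
  shows "fxi tL dL tR dR ` closed_segment x y = closed_segment (fxi_piece tL dL x) (fxi_piece tL dL y)"
proof -
  have "fst z \<le> 0" if "z \<in> closed_segment x y" for z
  proof -
    have "fst z \<in> closed_segment (fst x) (fst y)"
      using that fst_closed_segment by blast
    then show ?thesis
      using assms by (auto simp: closed_segment_eq_real_ivl split: if_splits)
  qed
  then have "fxi tL dL tR dR ` closed_segment x y = fxi_piece tL dL ` closed_segment x y"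
    by (auto simp: fxi_eq_piece)
  then show ?thesis
    by (simp add: fxi_piece_closed_segment)
qed

lemma fxi_closed_segment_right:
  assumes "0 \<le> fst x" "0 \<le> fst y"
  shows "fxi tL dL tR dR ` closed_segment x y = closed_segment (fxi_piece tR dR x) (fxi_piece tR dR y)"
proof -
  have "0 \<le> fst z" if "z \<in> closed_segment x y" for z
  proof -
    have "fst z \<in> closed_segment (fst x) (fst y)"
      using that fst_closed_segment by blast
    then show ?thesis
      using assms by (auto simp: closed_segment_eq_real_ivl split: if_splits)
  qed
  then have "fxi tL dL tR dR ` closed_segment x y = fxi_piece tR dR ` closed_segment x y"
    by (force simp: fxi_eq_piece fxi_piece_y_axis intro!: image_cong)
  then show ?thesis
    by (simp add: fxi_piece_closed_segment)
qed

lemma inj_fxi: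
  assumes "0 < dL" "0 < dR"
  shows "inj (fxi tL dL tR dR)"
proof (rule injI)
  fix p q
  assume eq: "fxi tL dL tR dR p = fxi tL dL tR dR q"
  have side: "fst z \<le> 0 \<longleftrightarrow> 0 \<le> snd (fxi tL dL tR dR z)" for z
    using assms by (auto simp: fxi_def mult_le_0_iff)
  have "fst p \<le> 0 \<longleftrightarrow> fst q \<le> 0"
    using side[of p] side[of q] eq by simp
  then have "fst p = fst q"
    using eq assms by (auto simp: fxi_def split: if_splits)
  then show "p = q"
    using eq by (auto simp: fxi_def prod_eq_iff split: if_splits)
qed

lemma funpow_Suc_image: "(g ^^ Suc n) ` X = g ` (g ^^ n) ` X"
  by (simp add: image_comp)

lemma product_over_sum_le_max:
  fixes b u t :: real
  assumes "0 < b" "0 < u"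
  shows "b * u / (b + u) \<le> max (b * t) (u * (1 - t))"
proof -
  have "t * (b + u) + (1 - t) * (b + u) = b + u"
    by (simp add: algebra_simps)
  then consider "u \<le> t * (b + u)" | "b \<le> (1 - t) * (b + u)"
    by linarith
  then show ?thesis
  proof cases
    case 1
    then have "b * u \<le> b * t * (b + u)"
      using assms(1) by (simp add: mult.assoc)
    then have "b * u / (b + u) \<le> b * t"
      using assms by (simp add: pos_divide_le_eq)
    then show ?thesis
      by simp
  next
    case 2
    then have "b * u \<le> u * (1 - t) * (b + u)"
      using assms(2) by (simp add: mult.assoc mult.commute)
    then have "b * u / (b + u) \<le> u * (1 - t)"
      using assms by (simp add: pos_divide_le_eq)
    then show ?thesis
      by simp
  qed
qed

section \<open>Eigenvalues of the companion matrices\<close>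

lemma lamRs_eq_neg_lamLs: "lamRs t d = - lamLs (- t) d"
  by (simp add: lamRs_def lamLs_def field_simps)

lemma lamRu_eq_neg_lamLu: "lamRu t d = - lamLu (- t) d"
  by (simp add: lamRu_def lamLu_def field_simps)

lemma lamLs_plus_lamLu: "lamLs t d + lamLu t d = t"
  by (simp add: lamLs_def lamLu_def field_simps)

lemma lamLs_times_lamLu:
  assumes "4 * d \<le> t\<^sup>2"
  shows "lamLs t d * lamLu t d = d"
proof -
  have "lamLs t d * lamLu t d = (t\<^sup>2 - (sqrt (t\<^sup>2 - 4 * d))\<^sup>2) / 4"
    by (simp add: lamLs_def lamLu_def power2_eq_square algebra_simps)
  then show ?thesis
    using assms by simp
qed

lemma saddle_discriminant:
  fixes t d :: real
  assumes "d + 1 < t" "0 < d"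
  shows "4 * d \<le> t\<^sup>2"
proof -
  have "(d + 1)\<^sup>2 \<le> t\<^sup>2"
    by (rule power_mono) (use assms in auto)
  moreover have "4 * d \<le> (d + 1)\<^sup>2"
    using sum_power2_ge_zero[of "d - 1" 0] by (simp add: power2_eq_square algebra_simps)
  ultimately show ?thesis
    by linarith
qed

lemma saddle_eigenvalues:
  assumes "d + 1 < t" "0 < d"
  shows "0 < lamLs t d" "lamLs t d < 1" "1 < lamLu t d"
proof -
  let ?x = "lamLs t d" and ?y = "lamLu t d"
  have disc: "4 * d \<le> t\<^sup>2"
    using assms by (rule saddle_discriminant)
  have prod: "?x * ?y = d"
    using disc by (rule lamLs_times_lamLu)
  have le: "?x \<le> ?y"
    using disc by (simp add: lamLs_def lamLu_def)
  have "(1 - ?x) * (?y - 1) = t - d - 1"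
    using prod lamLs_plus_lamLu[of t d] by (simp add: algebra_simps)
  then have pos: "0 < (1 - ?x) * (?y - 1)"
    using assms by simp
  show x1: "?x < 1"
  proof (rule ccontr)
    assume "\<not> ?x < 1"
    then have "(1 - ?x) * (?y - 1) \<le> 0"
      using le by (intro mult_nonpos_nonneg) auto
    then show False
      using pos by simp
  qed
  show y1: "1 < ?y"
    using pos x1 by (simp add: zero_less_mult_iff)
  show "0 < ?x"
    using zero_less_mult_pos2[of ?x ?y] prod y1 assms(2) by linarith
qed

section \<open>Forward invariance of the triangle\<close>

(* tL = a + b, dL = a b, tR = -(r + u), dR = r u; in these coordinates phi_pos is phi > 0
   and J1_gt_1 is J1 > 1. *)
locale byg_eigen =
  fixes a b r u :: real
  assumes a_pos: "0 < a" and a_lt_1: "a < 1" and b_gt_1: "1 < b"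
    and r_pos: "0 < r" and u_gt_1: "1 < u" and a_plus_r: "a + r < 1"
    and phi_pos: "(r * u + a * b + b * r + b * u) * (b - 1) < b * (b - a)"
    and J1_gt_1: "1 < b * u\<^sup>2 / (b + u)"
begin

abbreviation "f \<equiv> fxi (a + b) (a * b) (- (r + u)) (r * u)"
abbreviation "fL \<equiv> fxi_piece (a + b) (a * b)"
abbreviation "fR \<equiv> fxi_piece (- (r + u)) (r * u)"

definition "k = 1 / (1 - a)"
definition "e = 1 / (b - a)"
definition "S = r * u + a * b + b * r + b * u"
definition "sg = S * k * e"
definition "A2 = (a + r) * (a + u)"
definition "ph = b * (b - a) - S * (b - 1)"

definition "D = (k, 0 :: real)"
definition "F = (1 - (r + u) * k, - (r * u * k))"
definition "B = (k - sg, a * sg)"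
definition "Om = convex hull {D, F, B}"

lemma k_inverse: "k * (1 - a) = 1" and e_inverse: "e * (b - a) = 1"
  using a_lt_1 b_gt_1 by (simp_all add: k_def e_def)

lemma positive: "0 < k" "0 < e" "0 < S" "0 < A2" "0 < ph"
  using a_pos a_lt_1 b_gt_1 r_pos u_gt_1 phi_pos
  by (auto simp: k_def e_def S_def A2_def ph_def intro!: add_pos_pos mult_pos_pos)

lemma sg_pos: "0 < sg"
  using positive by (simp add: sg_def)

lemmas vertex_defs = S_def sg_def A2_def ph_def D_def F_def B_def orient_def fxi_piece_def

lemma orient_DFB: "orient D F B = - (S * A2 * k\<^sup>2 * e)"
  using k_inverse e_inverse by (simp only: vertex_defs fst_conv snd_conv) algebra

(* The fst-terms compensate for fL acting only on x <= 0 and fR only on x >= 0. *)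
lemma fL_vertex_orientations:
  "orient D F (fL D) = b * A2 * k * fst D"
  "orient D F (fL F) = b * A2 * k * fst F - r * u * A2 * k\<^sup>2"
  "orient D F (fL B) = b * A2 * k * fst B"
  "orient F B (fL D) = - (A2 * (b + r) * (b + u) * k\<^sup>2 * e)"
  "orient F B (fL F) = - (ph * A2 * k\<^sup>2 * e)"
  "orient F B (fL B) = - (ph * A2 * k\<^sup>2 * e)"
  "orient B D (fL D) = 0"
  "orient B D (fL F) = - (a * S * A2 * k\<^sup>2 * e)"
  "orient B D (fL B) = 0"
  using k_inverse e_inverse by (simp_all only: vertex_defs fst_conv snd_conv) algebra+

lemma fR_vertex_orientations:
  "orient D F (fR D) = 0"
  "orient D F (fR F) = - (r * u * A2 * k\<^sup>2)"
  "orient D F (fR B) = 0"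
  "orient F B (fR D) = 0"
  "orient F B (fR F) = - (A2 * (a*b*r + a*b*u + a*r*u + b*r\<^sup>2 + b*r*u + b*u\<^sup>2 + r\<^sup>2*u + r*u\<^sup>2) * k\<^sup>2 * e)"
  "orient F B (fR B) = - (S\<^sup>2 * A2 * k\<^sup>2 * e\<^sup>2)"
  "orient B D (fR D) = - (S * A2 * k * e * fst D)"
  "orient B D (fR F) = - (S * A2 * k * e * fst F) - a * S * A2 * k\<^sup>2 * e"
  "orient B D (fR B) = - (S * A2 * k * e * fst B)"
  using k_inverse e_inverse by (simp_all only: vertex_defs fst_conv snd_conv) algebra+

lemma Om_affine_bound:
  assumes "q \<in> Om"
    and "c1 * fst D + c2 * snd D + c0 \<le> 0" "c1 * fst F + c2 * snd F + c0 \<le> 0"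
      "c1 * fst B + c2 * snd B + c0 \<le> 0"
  shows "c1 * fst q + c2 * snd q + c0 \<le> 0"
proof (rule affine_nonpos_on_convex_hull)
  show "q \<in> convex hull {D, F, B}"
    using assms(1) by (simp add: Om_def)
qed (use assms(2-4) in auto)

lemma Om_orient_bound:
  assumes "q \<in> Om"
    and "orient P Q (fxi_piece t d D) + c * fst D \<le> 0" "orient P Q (fxi_piece t d F) + c * fst F \<le> 0"
      "orient P Q (fxi_piece t d B) + c * fst B \<le> 0"
  shows "orient P Q (fxi_piece t d q) + c * fst q \<le> 0"
proof -
  obtain c1 c2 c0 where g: "\<And>z. orient P Q (fxi_piece t d z) = c1 * fst z + c2 * snd z + c0"
    using orient_fxi_piece_affine by blast
  have "orient P Q (fxi_piece t d z) + c * fst z = (c1 + c) * fst z + c2 * snd z + c0" for z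
    by (simp add: g algebra_simps)
  then show ?thesis
    using Om_affine_bound[OF assms(1), of "c1 + c" c2 c0] assms(2-4) by simp
qed

lemma orient_DFB_neg: "orient D F B < 0"
  using positive by (simp add: orient_DFB)

lemma fL_maps_Om:
  assumes "q \<in> Om" and "fst q \<le> 0"
  shows "fL q \<in> Om"
proof -
  have nonneg: "0 \<le> r * u * A2 * k\<^sup>2" "0 \<le> A2 * (b + r) * (b + u) * k\<^sup>2 * e"
    "0 \<le> ph * A2 * k\<^sup>2 * e" "0 \<le> a * S * A2 * k\<^sup>2 * e" "0 \<le> b * A2 * k"
    using positive a_pos b_gt_1 r_pos u_gt_1 by simp_all
  have "orient D F (fL q) + - (b * A2 * k) * fst q \<le> 0"
    by (rule Om_orient_bound[OF assms(1)]) (use fL_vertex_orientations nonneg in simp_all)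
  moreover have "orient F B (fL q) + 0 * fst q \<le> 0"
    by (rule Om_orient_bound[OF assms(1)]) (use fL_vertex_orientations nonneg in simp_all)
  moreover have "orient B D (fL q) + 0 * fst q \<le> 0"
    by (rule Om_orient_bound[OF assms(1)]) (use fL_vertex_orientations nonneg in simp_all)
  moreover have "b * A2 * k * fst q \<le> 0"
    using nonneg(5) assms(2) by (simp add: mult_nonneg_nonpos)
  ultimately show ?thesis
    unfolding Om_def by (intro in_convex_hull3_if_orient_nonpos orient_DFB_neg) auto
qed

lemma fR_maps_Om:
  assumes "q \<in> Om" and "0 \<le> fst q"
  shows "fR q \<in> Om"
proof -
  have nonneg: "0 \<le> r * u * A2 * k\<^sup>2" "0 \<le> S\<^sup>2 * A2 * k\<^sup>2 * e\<^sup>2" "0 \<le> a * S * A2 * k\<^sup>2 * e"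
    "0 \<le> A2 * (a*b*r + a*b*u + a*r*u + b*r\<^sup>2 + b*r*u + b*u\<^sup>2 + r\<^sup>2*u + r*u\<^sup>2) * k\<^sup>2 * e"
    "0 \<le> S * A2 * k * e"
    using positive a_pos b_gt_1 r_pos u_gt_1 by simp_all
  have "orient D F (fR q) + 0 * fst q \<le> 0"
    by (rule Om_orient_bound[OF assms(1)]) (use fR_vertex_orientations nonneg in simp_all)
  moreover have "orient F B (fR q) + 0 * fst q \<le> 0"
    by (rule Om_orient_bound[OF assms(1)]) (use fR_vertex_orientations nonneg in simp_all)
  moreover have "orient B D (fR q) + S * A2 * k * e * fst q \<le> 0"
    by (rule Om_orient_bound[OF assms(1)]) (use fR_vertex_orientations nonneg in simp_all)
  moreover have "0 \<le> S * A2 * k * e * fst q"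
    using nonneg(5) assms(2) by simp
  ultimately show ?thesis
    unfolding Om_def by (intro in_convex_hull3_if_orient_nonpos orient_DFB_neg) auto
qed

lemma f_maps_Om: "f ` Om \<subseteq> Om"
  using fL_maps_Om fR_maps_Om by (auto simp: fxi_eq_piece)

definition "yV = - u / (u + 1)"
definition "xW = 1 / (r * (u + 1))"
definition "V = (0, yV)"
definition "W = (xW, yV + u * xW)"

(* mV and cW determine supporting lines of Om through V and through W. *)
definition "mV = r * u / (r + u + a)"
definition "cW = (1 - a - r - r * u) / (r * u * (u + a))"

lemma V_support_vertices:
  "mV * fst D - snd D + yV \<le> 0" "mV * fst F - snd F + yV \<le> 0" "mV * fst B - snd B + yV \<le> 0"
proof -
  define iu1 im where "iu1 = 1 / (u + 1)" and "im = 1 / (r + u + a)"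
  have inv: "iu1 * (u + 1) = 1" "im * (r + u + a) = 1"
    using a_pos r_pos u_gt_1 by (simp_all add: iu1_def im_def)
  have coeffs: "yV = - u * iu1" "mV = r * u * im"
    by (simp_all add: yV_def mV_def iu1_def im_def)
  define c where "c = u * (u + a) * (1 - a - r) * k * iu1 * im"
  have "0 \<le> c" "0 \<le> sg * (a + mV)"
    using a_pos a_plus_r r_pos u_gt_1 positive sg_pos by (simp_all add: c_def iu1_def im_def mV_def)
  moreover have "mV * fst D - snd D + yV = - c" "mV * fst F - snd F + yV = - c"
    "mV * fst B - snd B + yV = - c - sg * (a + mV)"
    unfolding coeffs c_def using k_inverse inv
    by (simp_all only: D_def F_def B_def fst_conv snd_conv) algebra+
  ultimately show "mV * fst D - snd D + yV \<le> 0" "mV * fst F - snd F + yV \<le> 0"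
    "mV * fst B - snd B + yV \<le> 0"
    by linarith+
qed

lemma W_support_vertices:
  "fst D - xW - cW * (snd D - yV - u * fst D) \<le> 0"
  "fst F - xW - cW * (snd F - yV - u * fst F) \<le> 0"
  "fst B - xW - cW * (snd B - yV - u * fst B) \<le> 0"
proof -
  define iu1 ir iu iua where "iu1 = 1 / (u + 1)" and "ir = 1 / r" and "iu = 1 / u" and "iua = 1 / (u + a)"
  have inv: "iu1 * (u + 1) = 1" "ir * r = 1" "iu * u = 1" "iua * (u + a) = 1"
    using a_pos r_pos u_gt_1 by (simp_all add: iu1_def ir_def iu_def iua_def)
  have coeffs: "yV = - u * iu1" "xW = ir * iu1" "cW = (1 - a - r - r * u) * ir * iu * iua"
    by (simp_all add: yV_def xW_def cW_def iu1_def ir_def iu_def iua_def)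
  have "0 \<le> (1 - a - r + r * (a + r)) * k * ir" "0 \<le> (1 - a - r) * S * k * e * ir * iu"
    using a_pos a_plus_r r_pos u_gt_1 positive by (simp_all add: ir_def iu_def)
  moreover have "fst D - xW - cW * (snd D - yV - u * fst D) = 0"
    "fst F - xW - cW * (snd F - yV - u * fst F) = - ((1 - a - r + r * (a + r)) * k * ir)"
    "fst B - xW - cW * (snd B - yV - u * fst B) = - ((1 - a - r) * S * k * e * ir * iu)"
    unfolding coeffs using k_inverse e_inverse inv
    by (simp_all only: D_def F_def B_def sg_def S_def fst_conv snd_conv) algebra+
  ultimately show "fst D - xW - cW * (snd D - yV - u * fst D) \<le> 0"
    "fst F - xW - cW * (snd F - yV - u * fst F) \<le> 0"
    "fst B - xW - cW * (snd B - yV - u * fst B) \<le> 0"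
    by linarith+
qed

lemma Om_above_V:
  assumes "q \<in> Om" and "fst q = 0"
  shows "yV \<le> snd q"
  using Om_affine_bound[OF assms(1), of mV "-1" yV] V_support_vertices assms(2) by simp

lemma Om_left_of_W:
  assumes "q \<in> Om" and "snd q = yV + u * fst q"
  shows "fst q \<le> xW"
proof -
  have "(1 + cW * u) * fst q + (- cW) * snd q + (cW * yV - xW) \<le> 0"
    by (rule Om_affine_bound[OF assms(1)]) (use W_support_vertices in \<open>simp_all add: algebra_simps\<close>)
  then show ?thesis
    using assms(2) by (simp add: algebra_simps)
qed

lemma Om_fst_bounded: "\<exists>M. \<forall>q \<in> Om. \<bar>fst q\<bar> \<le> M"
proof (intro exI ballI)
  fix q
  assume "q \<in> Om"
  let ?M = "\<bar>fst D\<bar> + \<bar>fst F\<bar> + \<bar>fst B\<bar>"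
  have "1 * fst q + 0 * snd q + - ?M \<le> 0" "(- 1) * fst q + 0 * snd q + - ?M \<le> 0"
    by (rule Om_affine_bound[OF \<open>q \<in> Om\<close>]; simp)+
  then show "\<bar>fst q\<bar> \<le> ?M"
    unfolding abs_le_iff by linarith
qed

section \<open>Growth of segments in the slope cone\<close>

definition "seg_end p w m = p + (w, w * m)"

definition cone_segment :: "(real \<times> real) set \<Rightarrow> nat \<Rightarrow> real \<times> real \<Rightarrow> real \<Rightarrow> real \<Rightarrow> bool" where
  "cone_segment al n p w m \<longleftrightarrow>
     0 < w \<and> - a \<le> m \<and> m \<le> r \<and> closed_segment p (seg_end p w m) \<subseteq> (f ^^ n) ` al"

definition hits_axes :: "(real \<times> real) set \<Rightarrow> bool" where
  "hits_axes al \<longleftrightarrow> (\<exists>n::nat. n \<ge> 1 \<and> (\<exists>P Q. fst P = 0 \<and> snd Q = 0 \<and>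
     closed_segment P Q \<subseteq> (f ^^ n) ` al \<and> transversal_segments P Q V W))"

lemma iterates_Om: "al \<subseteq> Om \<Longrightarrow> (f ^^ n) ` al \<subseteq> Om"
  by (induction n) (use f_maps_Om in \<open>auto simp: funpow_Suc_image\<close>)

lemma cone_segment_left:
  assumes seg: "cone_segment al n p w m" and left: "fst p + w \<le> 0"
  shows "cone_segment al (Suc n) (fL p) (w * (a + b + m)) (- (a * b) / (a + b + m))"
    and "seg_end (fL p) (w * (a + b + m)) (- (a * b) / (a + b + m)) = fL (seg_end p w m)"
    and "b * w \<le> w * (a + b + m)"
proof -
  have w: "0 < w" "- a \<le> m" "m \<le> r" and sub: "closed_segment p (seg_end p w m) \<subseteq> (f ^^ n) ` al"
    using seg by (auto simp: cone_segment_def)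
  have abm: "0 < a + b + m"
    using w b_gt_1 by linarith
  show end_eq: "seg_end (fL p) (w * (a + b + m)) (- (a * b) / (a + b + m)) = fL (seg_end p w m)"
    using abm by (simp add: seg_end_def fxi_piece_def field_simps)
  have "0 \<le> (a + m) * w"
    using w by simp
  then show "b * w \<le> w * (a + b + m)"
    by (simp add: algebra_simps)
  have "fst p \<le> 0" "fst (seg_end p w m) \<le> 0"
    using left w by (auto simp: seg_end_def)
  then have "closed_segment (fL p) (fL (seg_end p w m)) = f ` closed_segment p (seg_end p w m)"
    by (simp add: fxi_closed_segment_left)
  also have "\<dots> \<subseteq> (f ^^ Suc n) ` al"
    using sub by (auto simp: funpow_Suc_image)
  finally have "closed_segment (fL p) (fL (seg_end p w m)) \<subseteq> (f ^^ Suc n) ` al" .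
  moreover have "- a \<le> - (a * b) / (a + b + m)"
  proof -
    have "0 \<le> a * (a + m)"
      using w a_pos by simp
    then have "a * b \<le> a * (a + b + m)"
      by (simp add: algebra_simps)
    then have "a * b / (a + b + m) \<le> a"
      using abm by (simp add: pos_divide_le_eq mult.commute)
    then show ?thesis
      by simp
  qed
  moreover have "- (a * b) / (a + b + m) \<le> r"
  proof -
    have "0 \<le> a * b / (a + b + m)"
      using abm a_pos b_gt_1 by simp
    then show ?thesis
      using r_pos by simp
  qed
  ultimately show "cone_segment al (Suc n) (fL p) (w * (a + b + m)) (- (a * b) / (a + b + m))"
    unfolding cone_segment_def end_eq using w abm by simp
qed

lemma cone_segment_right:
  assumes seg: "cone_segment al n p w m" and right: "0 \<le> fst p"
  shows "cone_segment al (Suc n) (fR (seg_end p w m)) (w * (r + u - m)) (r * u / (r + u - m))"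
    and "seg_end (fR (seg_end p w m)) (w * (r + u - m)) (r * u / (r + u - m)) = fR p"
    and "u * w \<le> w * (r + u - m)"
proof -
  have w: "0 < w" "- a \<le> m" "m \<le> r" and sub: "closed_segment p (seg_end p w m) \<subseteq> (f ^^ n) ` al"
    using seg by (auto simp: cone_segment_def)
  have rum: "0 < r + u - m"
    using w u_gt_1 by linarith
  show end_eq: "seg_end (fR (seg_end p w m)) (w * (r + u - m)) (r * u / (r + u - m)) = fR p"
    using rum by (simp add: seg_end_def fxi_piece_def field_simps)
  show "u * w \<le> w * (r + u - m)"
    using w by (simp add: algebra_simps)
  have "0 \<le> fst p" "0 \<le> fst (seg_end p w m)"
    using right w by (auto simp: seg_end_def)
  then have "closed_segment (fR (seg_end p w m)) (fR p) = f ` closed_segment p (seg_end p w m)"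
    by (simp add: fxi_closed_segment_right closed_segment_commute)
  also have "\<dots> \<subseteq> (f ^^ Suc n) ` al"
    using sub by (auto simp: funpow_Suc_image)
  finally have "closed_segment (fR (seg_end p w m)) (fR p) \<subseteq> (f ^^ Suc n) ` al" .
  moreover have "- a \<le> r * u / (r + u - m)"
    using rum r_pos u_gt_1 a_pos by (simp add: divide_nonneg_pos order_trans[of "- a" 0])
  moreover have "r * u / (r + u - m) \<le> r"
  proof -
    have "0 \<le> r * (r - m)"
      using w r_pos by simp
    then have "r * u \<le> r * (r + u - m)"
      by (simp add: algebra_simps)
    then show ?thesis
      using rum by (simp add: pos_divide_le_eq mult.commute)
  qed
  ultimately show "cone_segment al (Suc n) (fR (seg_end p w m)) (w * (r + u - m)) (r * u / (r + u - m))"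
    unfolding cone_segment_def end_eq using w rum by simp
qed

lemma cone_segment_sub:
  assumes seg: "cone_segment al n p w m" and "0 \<le> s" "s < t" "t \<le> 1"
  shows "cone_segment al n (p + (s * w, s * w * m)) ((t - s) * w) m"
    and "seg_end (p + (s * w, s * w * m)) ((t - s) * w) m = p + (t * w, t * w * m)"
proof -
  have w: "0 < w" "- a \<le> m" "m \<le> r" and sub: "closed_segment p (seg_end p w m) \<subseteq> (f ^^ n) ` al"
    using seg by (auto simp: cone_segment_def)
  show end_eq: "seg_end (p + (s * w, s * w * m)) ((t - s) * w) m = p + (t * w, t * w * m)"
    by (simp add: seg_end_def algebra_simps)
  have on_seg: "p + (c * w, c * w * m) \<in> closed_segment p (seg_end p w m)" if "0 \<le> c" "c \<le> 1" for c
    unfolding in_segment seg_end_def using that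
    by (intro exI[of _ c]) (simp add: prod_eq_iff algebra_simps)
  have "closed_segment (p + (s * w, s * w * m)) (p + (t * w, t * w * m)) \<subseteq> closed_segment p (seg_end p w m)"
    by (rule closed_segment_subset) (use on_seg assms(2-4) in auto)
  then show "cone_segment al n (p + (s * w, s * w * m)) ((t - s) * w) m"
    using sub w assms(2-4) by (auto simp: cone_segment_def end_eq)
qed

lemma yV_plus_1_pos: "0 < 1 + yV" and neg_yV: "- yV = u * (1 + yV)"
  using u_gt_1 by (simp_all add: yV_def field_simps)

lemma xW_pos: "0 < xW"
  using r_pos u_gt_1 by (simp add: xW_def)

lemma transversal_to_VW:
  assumes sub: "closed_segment P Q \<subseteq> Om" and P: "fst P = 0" and Q: "snd Q = 0" "1 + yV \<le> fst Q"
    and slope: "snd P = - m * fst Q" and m_lt_u: "m < u"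
  shows "transversal_segments P Q V W"
proof -
  define x where "x = fst Q"
  have Qe: "Q = (x, 0)" and Pe: "P = (0, - m * x)"
    using P Q slope by (simp_all add: x_def prod_eq_iff)
  have x_pos: "0 < x"
    using Q(2) yV_plus_1_pos unfolding x_def by linarith
  have "yV \<le> - m * x"
    using Om_above_V[of P] sub P slope by (auto simp: x_def)
  define s where "s = (- m * x - yV) / (u - m)"
  have s_eq: "- m * x - yV = (u - m) * s"
    using m_lt_u by (simp add: s_def)
  have "0 \<le> s"
    using \<open>yV \<le> - m * x\<close> m_lt_u by (simp add: s_def)
  have "u * (1 + yV) \<le> u * x"
    using Q(2) u_gt_1 by (simp add: x_def)
  then have "- m * x - yV \<le> (u - m) * x"
    using neg_yV by (simp add: algebra_simps)
  then have "s \<le> x"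
    using s_eq m_lt_u by (simp add: mult_le_cancel_left_pos)
  define X where "X = (s, yV + u * s)"
  have "(1 - s / x) * (- m * x) = - m * x + m * s"
    using x_pos by (simp add: field_simps)
  then have "X = (1 - s / x) *\<^sub>R P + (s / x) *\<^sub>R Q"
    using x_pos s_eq by (simp add: X_def Pe Qe algebra_simps)
  moreover have "0 \<le> s / x" "s / x \<le> 1"
    using \<open>0 \<le> s\<close> \<open>s \<le> x\<close> x_pos by simp_all
  ultimately have X_PQ: "X \<in> closed_segment P Q"
    unfolding in_segment by blast
  then have "s \<le> xW"
    using Om_left_of_W[of X] sub by (auto simp: X_def)
  have "X = (1 - s / xW) *\<^sub>R V + (s / xW) *\<^sub>R W"
    using xW_pos by (simp add: X_def V_def W_def field_simps)
  moreover have "0 \<le> s / xW" "s / xW \<le> 1"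
    using \<open>0 \<le> s\<close> \<open>s \<le> xW\<close> xW_pos by simp_all
  ultimately have X_VW: "X \<in> closed_segment V W"
    unfolding in_segment by blast
  have "fst (Q - P) * snd (W - V) - snd (Q - P) * fst (W - V) = xW * x * (u - m)"
    by (simp add: Pe Qe V_def W_def algebra_simps)
  then show ?thesis
    unfolding transversal_segments_def using X_PQ X_VW x_pos xW_pos m_lt_u
    by (auto simp: Pe Qe V_def W_def)
qed

lemma hits_axes_if_crossing:
  assumes "al \<subseteq> Om" and seg: "cone_segment al n p w m" and "1 \<le> n" and left: "fst p \<le> 0"
    and on_x_axis: "snd (seg_end p w m) = 0" and beyond: "1 + yV \<le> fst (seg_end p w m)"
  shows "hits_axes al"
proof -
  define Q where "Q = seg_end p w m"
  have w: "0 < w" "m \<le> r" and sub: "closed_segment p Q \<subseteq> (f ^^ n) ` al"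
    using seg by (auto simp: cone_segment_def Q_def)
  define t where "t = - fst p / w"
  have "0 \<le> fst p + w"
    using beyond yV_plus_1_pos by (simp add: seg_end_def)
  then have t: "0 \<le> t" "t \<le> 1"
    using left w by (auto simp: t_def field_simps)
  define P where "P = p + (t * w, t * w * m)"
  have P: "fst P = 0" "snd P = - m * fst Q"
    using w on_x_axis by (simp_all add: P_def Q_def t_def seg_end_def algebra_simps)
  have "P \<in> closed_segment p Q"
    unfolding in_segment P_def Q_def seg_end_def using t
    by (intro exI[of _ t]) (simp add: prod_eq_iff algebra_simps)
  then have "closed_segment P Q \<subseteq> closed_segment p Q"
    by (simp add: closed_segment_subset)
  then have PQ: "closed_segment P Q \<subseteq> (f ^^ n) ` al"
    using sub by blast
  have "m < u"
    using w r_pos a_plus_r a_pos u_gt_1 by linarith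
  then have "transversal_segments P Q V W"
    using transversal_to_VW PQ iterates_Om[OF assms(1)] P on_x_axis beyond Q_def
    by (meson order_trans)
  then show ?thesis
    unfolding hits_axes_def using assms(3) P PQ on_x_axis Q_def by blast
qed

lemma cone_segment_straddle:
  assumes seg: "cone_segment al n p w m" and "fst p < 0" "0 < fst p + w"
  obtains p' w' m' z where "cone_segment al (Suc n) p' w' m'" "seg_end p' w' m' = (snd z + 1, 0)"
    "z \<in> (f ^^ n) ` al" "fst z = 0" "b * u / (b + u) * w \<le> w'"
proof -
  have w: "0 < w"
    using seg by (simp add: cone_segment_def)
  define t where "t = - fst p / w"
  have t: "0 < t" "t < 1" "fst p + t * w = 0"
    using assms(2,3) w by (simp_all add: t_def field_simps)
  define z where "z = p + (t * w, t * w * m)"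
  have left: "cone_segment al n p (t * w) m" "seg_end p (t * w) m = z"
    using cone_segment_sub[OF seg, of 0 t] t by (simp_all add: z_def zero_prod_def[symmetric])
  have right: "cone_segment al n z ((1 - t) * w) m" "seg_end z ((1 - t) * w) m = seg_end p w m"
    using cone_segment_sub[OF seg, of t 1] t by (simp_all add: z_def seg_end_def)
  have "fst z = 0"
    using t by (simp add: z_def)
  then have fz: "fL z = (snd z + 1, 0)" "fR z = (snd z + 1, 0)"
    by (simp_all add: fxi_piece_y_axis)
  have "z \<in> (f ^^ n) ` al"
    using left by (auto simp: cone_segment_def)
  have "b * u / (b + u) \<le> max (b * t) (u * (1 - t))"
    using b_gt_1 u_gt_1 by (simp add: product_over_sum_le_max)
  then consider "b * u / (b + u) \<le> b * t" | "b * u / (b + u) \<le> u * (1 - t)"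
    by linarith
  then show ?thesis
  proof cases
    case 1
    have "fst p + t * w \<le> 0"
      using t(3) by simp
    note L = cone_segment_left[OF left(1) this]
    have "b * u / (b + u) * w \<le> b * t * w"
      using mult_right_mono[OF 1] w by simp
    also have "\<dots> \<le> t * w * (a + b + m)"
      using L(3) by (simp add: mult.assoc)
    finally have "b * u / (b + u) * w \<le> t * w * (a + b + m)" .
    then show ?thesis
      using L(2) fz(1) by (intro that[OF L(1) _ \<open>z \<in> (f ^^ n) ` al\<close> \<open>fst z = 0\<close>]) (simp_all add: left(2))
  next
    case 2
    have "0 \<le> fst z"
      using \<open>fst z = 0\<close> by simp
    note R = cone_segment_right[OF right(1) this]
    have "b * u / (b + u) * w \<le> u * (1 - t) * w"
      using mult_right_mono[OF 2] w by simp
    also have "\<dots> \<le> (1 - t) * w * (r + u - m)"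
      using R(3) by (simp add: mult.assoc)
    finally have "b * u / (b + u) * w \<le> (1 - t) * w * (r + u - m)" .
    then show ?thesis
      using R(2) fz(2) by (intro that[OF R(1) _ \<open>z \<in> (f ^^ n) ` al\<close> \<open>fst z = 0\<close>]) simp_all
  qed
qed

definition "rho = min b (min u (b * u\<^sup>2 / (b + u)))"

lemma rho_gt_1: "1 < rho"
  using b_gt_1 u_gt_1 J1_gt_1 by (simp add: rho_def)

lemma cone_segment_expands:
  assumes "al \<subseteq> Om" and seg: "cone_segment al n p w m" and "\<not> hits_axes al"
  obtains n' p' w' m' where "cone_segment al n' p' w' m'" "rho * w \<le> w'"
proof -
  have w: "0 < w"
    using seg by (simp add: cone_segment_def)
  consider "fst p + w \<le> 0" | "0 \<le> fst p" | "fst p < 0" "0 < fst p + w"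
    by linarith
  then show ?thesis
  proof cases
    case 1
    have "rho * w \<le> b * w"
      using w by (simp add: rho_def)
    then show ?thesis
      using cone_segment_left[OF seg 1] that by (meson order_trans)
  next
    case 2
    have "rho * w \<le> u * w"
      using w by (simp add: rho_def)
    then show ?thesis
      using cone_segment_right[OF seg 2] that by (meson order_trans)
  next
    case 3
    obtain p' w' m' z where straddle: "cone_segment al (Suc n) p' w' m'"
      "seg_end p' w' m' = (snd z + 1, 0)" "z \<in> (f ^^ n) ` al" "fst z = 0" "b * u / (b + u) * w \<le> w'"
      using cone_segment_straddle[OF seg 3] .
    have "yV \<le> snd z"
      using Om_above_V iterates_Om[OF assms(1)] straddle(3,4) by blast
    have "0 < fst p'"
    proof (rule ccontr)
      assume "\<not> 0 < fst p'"
      then have "hits_axes al"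
        by (intro hits_axes_if_crossing[OF assms(1) straddle(1)]) (use straddle(2) \<open>yV \<le> snd z\<close> in auto)
      with assms(3) show False ..
    qed
    note R = cone_segment_right[OF straddle(1) less_imp_le[OF this]]
    define H where "H = b * u / (b + u)"
    have "b * u\<^sup>2 / (b + u) = u * H"
      by (simp add: H_def power2_eq_square mult_ac)
    then have "rho \<le> u * H"
      unfolding rho_def by linarith
    then have "rho * w \<le> u * H * w"
      by (rule mult_right_mono) (use w in simp)
    also have "\<dots> \<le> u * w'"
      using mult_left_mono[OF straddle(5)[folded H_def], of u] u_gt_1 by (simp add: mult.assoc)
    also have "\<dots> \<le> w' * (r + u - m')"
      using R(3) .
    finally show ?thesis
      using R(1) that by blast
  qed
qed

lemma cone_segment_growth:
  assumes "al \<subseteq> Om" and "cone_segment al n p w m" and "\<not> hits_axes al"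
  shows "\<exists>n' p' w' m'. cone_segment al n' p' w' m' \<and> rho ^ N * w \<le> w'"
proof (induction N)
  case 0
  show ?case
    using assms(2) by (intro exI[of _ n] exI[of _ p] exI[of _ w] exI[of _ m]) simp
next
  case (Suc N)
  then obtain n' p' w' m' where seg: "cone_segment al n' p' w' m'" and "rho ^ N * w \<le> w'"
    by blast
  then have "rho ^ Suc N * w \<le> rho * w'"
    using rho_gt_1 by (simp add: mult.assoc)
  moreover obtain n'' p'' w'' m'' where "cone_segment al n'' p'' w'' m''" "rho * w' \<le> w''"
    using cone_segment_expands[OF assms(1) seg assms(3)] .
  ultimately show ?case
    by (meson order_trans)
qed

lemma cone_segment_width_bounded:
  assumes "al \<subseteq> Om"
  obtains M where "\<And>n p w m. cone_segment al n p w m \<Longrightarrow> w \<le> M"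
proof -
  obtain M where M: "\<And>q. q \<in> Om \<Longrightarrow> \<bar>fst q\<bar> \<le> M"
    using Om_fst_bounded by blast
  have "w \<le> 2 * M" if "cone_segment al n p w m" for n p w m
  proof -
    have "p \<in> Om" "seg_end p w m \<in> Om"
      using that iterates_Om[OF assms, of n] ends_in_segment unfolding cone_segment_def by blast+
    then have "\<bar>fst p\<bar> \<le> M" "\<bar>fst p + w\<bar> \<le> M"
      using M[of p] M[of "seg_end p w m"] by (simp_all add: seg_end_def)
    then show ?thesis
      by linarith
  qed
  then show ?thesis
    using that by blast
qed

lemma hits_axes_if_cone_segment:
  assumes "al \<subseteq> Om" and seg: "cone_segment al n p w m"
  shows "hits_axes al"
proof (rule ccontr)
  assume no_hit: "\<not> hits_axes al"
  obtain M where M: "\<And>n p w m. cone_segment al n p w m \<Longrightarrow> w \<le> M"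
    using cone_segment_width_bounded[OF assms(1)] by blast
  have w: "0 < w"
    using seg by (simp add: cone_segment_def)
  obtain N where "M / w < rho ^ N"
    using real_arch_pow[OF rho_gt_1] by blast
  then have "M < rho ^ N * w"
    using w by (simp add: field_simps)
  moreover obtain n' p' w' m' where "cone_segment al n' p' w' m'" "rho ^ N * w \<le> w'"
    using cone_segment_growth[OF assms no_hit] by blast
  ultimately show False
    using M by (meson leD less_le_trans)
qed

lemma cone_segment_of_slope:
  assumes "is_segment_with_slope al m" "- a \<le> m" "m \<le> r"
  obtains p w where "cone_segment al 0 p w m"
proof -
  obtain x y c where xy: "al = closed_segment x y" "c \<noteq> 0" "y - x = c *\<^sub>R (1, m)"
    using assms(1) unfolding is_segment_with_slope_def by blast
  show ?thesis
  proof (cases "0 < c")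
    case True
    have "seg_end x c m = y"
      using xy(3) by (simp add: seg_end_def prod_eq_iff algebra_simps)
    then show ?thesis
      using that[of x c] True assms(2,3) xy(1) by (simp add: cone_segment_def)
  next
    case False
    have "seg_end y (- c) m = x"
      using xy(3) by (simp add: seg_end_def prod_eq_iff algebra_simps)
    then show ?thesis
      using that[of y "- c"] False xy(1,2) assms(2,3) by (simp add: cone_segment_def closed_segment_commute)
  qed
qed

lemma eigenvalues:
  "lamLs (a + b) (a * b) = a" "lamLu (a + b) (a * b) = b"
  "lamRs (- (r + u)) (r * u) = - r" "lamRu (- (r + u)) (r * u) = - u"
proof -
  have "(a + b)\<^sup>2 - 4 * (a * b) = (b - a)\<^sup>2" "(- (r + u))\<^sup>2 - 4 * (r * u) = (u - r)\<^sup>2"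
    by (simp_all add: power2_eq_square algebra_simps)
  moreover have "0 \<le> b - a" "0 \<le> u - r"
    using a_lt_1 b_gt_1 a_pos a_plus_r u_gt_1 by simp_all
  ultimately have "sqrt ((a + b)\<^sup>2 - 4 * (a * b)) = b - a" "sqrt ((- (r + u))\<^sup>2 - 4 * (r * u)) = u - r"
    by simp_all
  then show "lamLs (a + b) (a * b) = a" "lamLu (a + b) (a * b) = b"
    "lamRs (- (r + u)) (r * u) = - r" "lamRu (- (r + u)) (r * u) = - u"
    by (simp_all add: lamLs_def lamLu_def lamRs_def lamRu_def)
qed

lemma Dpt_eq: "Dpt (a + b) (a * b) = D"
  by (simp add: Dpt_def D_def k_def eigenvalues)

lemma f_D: "f D = F"
  using positive by (simp add: fxi_def D_def F_def algebra_simps)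

lemma f_W: "f W = V"
proof -
  have "r * xW = 1 / (u + 1)"
    using r_pos by (simp add: xW_def)
  also have "\<dots> = 1 + yV"
    using u_gt_1 by (simp add: yV_def field_simps)
  finally have "r * xW = 1 + yV" .
  moreover have "r * u * xW = - yV"
    using calculation neg_yV by (simp add: mult.commute mult.left_commute)
  ultimately show ?thesis
    using xW_pos by (simp add: fxi_def W_def V_def algebra_simps)
qed

lemma inv_f_V: "inv f V = W"
  using inj_fxi[of "a * b" "r * u"] a_pos b_gt_1 r_pos u_gt_1 f_W by (metis inv_f_f mult_pos_pos less_trans zero_less_one)

lemma Vpt_eq: "Vpt (- (r + u)) (r * u) = V"
  unfolding Vpt_def eigenvalues using u_gt_1 by (simp add: V_def yV_def field_simps)

lemma Ypt_eq: "Ypt (a + b) (a * b) = (k - k * b / (b - 1), a * (k * b / (b - 1)))"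
proof -
  have "a + b - a * b - 1 = (1 - a) * (b - 1)"
    by (simp add: algebra_simps)
  moreover have "k - k * b / (b - 1) = - k / (b - 1)"
    using b_gt_1 by (simp add: field_simps)
  ultimately show ?thesis
    by (simp add: Ypt_def k_def)
qed

lemma segment_YD_on_line:
  assumes "y \<in> closed_segment (Ypt (a + b) (a * b)) D"
  shows "snd y + a * fst y = a * k"
proof -
  obtain t where "y = (1 - t) *\<^sub>R Ypt (a + b) (a * b) + t *\<^sub>R D"
    using assms unfolding in_segment by blast
  then show ?thesis
    by (simp add: Ypt_eq D_def algebra_simps)
qed

lemma B_in_segment_YD: "B \<in> closed_segment (Ypt (a + b) (a * b)) D"
proof -
  define \<sigma> where "\<sigma> = k * b / (b - 1)"
  have "0 < \<sigma>"
    using positive b_gt_1 by (simp add: \<sigma>_def)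
  have "S * (b - 1) * k \<le> b * (b - a) * k"
    using phi_pos positive by (simp add: S_def mult_right_mono)
  then have "sg \<le> \<sigma>"
    using a_lt_1 b_gt_1 positive by (simp add: sg_def \<sigma>_def e_def field_simps)
  have "Ypt (a + b) (a * b) = (k - \<sigma>, a * \<sigma>)"
    by (simp add: Ypt_eq \<sigma>_def)
  then have "B = (sg / \<sigma>) *\<^sub>R Ypt (a + b) (a * b) + (1 - sg / \<sigma>) *\<^sub>R D"
    using \<open>0 < \<sigma>\<close> by (simp add: B_def D_def field_simps)
  moreover have "0 \<le> 1 - sg / \<sigma>" "1 - sg / \<sigma> \<le> 1"
    using \<open>sg \<le> \<sigma>\<close> \<open>0 < \<sigma>\<close> sg_pos by simp_all
  ultimately show ?thesis
    unfolding in_segment by (intro exI[of _ "1 - sg / \<sigma>"]) simp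
qed

lemma stable_eigenvector_iff: "A_L (a + b) (a * b) x = a *\<^sub>R x \<longleftrightarrow> snd x = - b * fst x"
  using a_pos by (auto simp: A_L_def prod_eq_iff algebra_simps)

lemma B_on_stable_line: "snd B + b * fst B = snd F + b * fst F"
  using k_inverse e_inverse by (simp only: vertex_defs fst_conv snd_conv) algebra

lemma Bpt_eq: "Bpt (a + b) (a * b) (- (r + u)) (r * u) = B"
  unfolding Bpt_def Dpt_eq f_D eigenvalues
proof (rule the_equality)
  have "B = F + (fst B - fst F) *\<^sub>R (1, - b)"
    using B_on_stable_line by (simp add: prod_eq_iff algebra_simps)
  moreover have "A_L (a + b) (a * b) (1, - b) = a *\<^sub>R (1, - b)"
    by (simp add: A_L_def)
  moreover have "(1 :: real, - b) \<noteq> 0"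
    by (simp add: zero_prod_def)
  ultimately show "B \<in> closed_segment (Ypt (a + b) (a * b)) D \<and>
      (\<exists>v t. v \<noteq> 0 \<and> A_L (a + b) (a * b) v = a *\<^sub>R v \<and> B = F + t *\<^sub>R v)"
    using B_in_segment_YD by blast
next
  fix y
  assume "y \<in> closed_segment (Ypt (a + b) (a * b)) D \<and>
      (\<exists>v t. v \<noteq> 0 \<and> A_L (a + b) (a * b) v = a *\<^sub>R v \<and> y = F + t *\<^sub>R v)"
  then obtain v t where y: "snd y + a * fst y = a * k" "snd v = - b * fst v" "y = F + t *\<^sub>R v"
    using segment_YD_on_line stable_eigenvector_iff by blast
  have "snd B + a * fst B = a * k"
    by (simp add: B_def algebra_simps)
  moreover have "snd y + b * fst y = snd F + b * fst F"
    using y(2,3) by (simp add: algebra_simps)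
  ultimately have "(b - a) * (fst y - fst B) = 0"
    using y(1) B_on_stable_line by (simp add: algebra_simps)
  then have "fst y = fst B"
    using a_lt_1 b_gt_1 by simp
  moreover have "snd y = snd B"
    using calculation y(1) \<open>snd B + a * fst B = a * k\<close> by simp
  ultimately show "y = B"
    by (simp add: prod_eq_iff)
qed

lemma Omega_eq: "Omega (a + b) (a * b) (- (r + u)) (r * u) = Om"
  unfolding Omega_def Dpt_eq Bpt_eq f_D Om_def ..

theorem segment_image_crosses_axes:
  assumes "alpha \<subseteq> Omega (a + b) (a * b) (- (r + u)) (r * u)"
    and "is_segment_with_slope alpha m" "- a \<le> m" "m \<le> r"
  shows "\<exists>n::nat. n \<ge> 1 \<and> (\<exists>P Q. fst P = 0 \<and> snd Q = 0 \<and>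
           closed_segment P Q \<subseteq> (f ^^ n) ` alpha \<and>
           transversal_segments P Q (Vpt (- (r + u)) (r * u)) (inv f (Vpt (- (r + u)) (r * u))))"
proof -
  obtain p w where "cone_segment alpha 0 p w m"
    using cone_segment_of_slope assms(2-4) by blast
  then have "hits_axes alpha"
    using hits_axes_if_cone_segment assms(1) Omega_eq by simp
  then show ?thesis
    unfolding hits_axes_def Vpt_eq inv_f_V .
qed

end

lemma Phi_BYG_eigen_coordinates:
  assumes "(tL, dL, tR, dR) \<in> Phi_BYG" and "1 < J1 tL dL tR dR" and "lamLs tL dL + \<bar>lamRs tR dR\<bar> < 1"
  obtains a b r u where "byg_eigen a b r u" "tL = a + b" "dL = a * b" "tR = - (r + u)" "dR = r * u"
proof -
  have h: "dL + 1 < tL" "0 < dL" "dR + 1 < - tR" "0 < dR" "0 < phi tL dL tR dR"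
    using assms(1) by (auto simp: Phi_BYG_def Phi_def)
  define a b r u where "a = lamLs tL dL" and "b = lamLu tL dL"
    and "r = lamLs (- tR) dR" and "u = lamLu (- tR) dR"
  have ab: "0 < a" "a < 1" "1 < b" and ru: "0 < r" "r < 1" "1 < u"
    using saddle_eigenvalues[OF h(1,2)] saddle_eigenvalues[OF h(3,4)] by (simp_all add: a_def b_def r_def u_def)
  have params: "tL = a + b" "dL = a * b" "tR = - (r + u)" "dR = r * u"
    using lamLs_plus_lamLu[of tL dL] lamLs_plus_lamLu[of "- tR" dR]
      lamLs_times_lamLu[OF saddle_discriminant[OF h(1,2)]] lamLs_times_lamLu[OF saddle_discriminant[OF h(3,4)]]
    by (simp_all add: a_def b_def r_def u_def)
  have R: "lamRs tR dR = - r" "lamRu tR dR = - u"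
    by (simp_all add: lamRs_eq_neg_lamLs lamRu_eq_neg_lamLu r_def u_def)
  have "phi tL dL tR dR = b * (b - a) - (r * u + a * b + b * r + b * u) * (b - 1)"
    by (simp add: phi_def params(1-4)[symmetric] b_def[symmetric]) (simp add: params algebra_simps)
  moreover have "J1 tL dL tR dR = b * u\<^sup>2 / (b + u)"
    using ru by (simp add: J1_def R b_def[symmetric])
  moreover have "a + r < 1"
    using assms(3) ru by (simp add: R a_def[symmetric])
  ultimately have "byg_eigen a b r u"
    using ab ru h(5) assms(2) by unfold_locales simp_all
  then show ?thesis
    using that params by blast
qed

theorem lemma5p3:
  fixes tL dL tR dR :: real and alpha :: "(real \<times> real) set"
  assumes "(tL, dL, tR, dR) \<in> Phi_BYG"
    and "J1 tL dL tR dR > 1"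
    and "lamLs tL dL + \<bar>lamRs tR dR\<bar> < 1"
    and "alpha \<subseteq> Omega tL dL tR dR"
    and "\<exists>m. m \<in> {- lamLs tL dL .. \<bar>lamRs tR dR\<bar>} \<and> is_segment_with_slope alpha m"
  shows "\<exists>n::nat. n \<ge> 1 \<and> (\<exists>P Q. fst P = 0 \<and> snd Q = 0 \<and>
           closed_segment P Q \<subseteq> (fxi tL dL tR dR ^^ n) ` alpha \<and>
           transversal_segments P Q (Vpt tR dR) (inv (fxi tL dL tR dR) (Vpt tR dR)))"
proof -
  obtain a b r u where "byg_eigen a b r u"
    and params: "tL = a + b" "dL = a * b" "tR = - (r + u)" "dR = r * u"
    using Phi_BYG_eigen_coordinates assms(1-3) by blast
  then interpret byg_eigen a b r u
    by simp
  obtain m where m: "m \<in> {- lamLs tL dL .. \<bar>lamRs tR dR\<bar>}" "is_segment_with_slope alpha m"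
    using assms(5) by blast
  then have "- a \<le> m" "m \<le> r"
    using r_pos unfolding params eigenvalues by auto
  then show ?thesis
    unfolding params using segment_image_crosses_axes assms(4)[unfolded params] m(2) by blast
qed

end
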